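(* Let $L>0$ and let $\alpha,\beta:\mathbb{R}\to\mathbb{R}^2$ be smooth $L$-periodic maps with $\alpha'$ nowhere zero, $\langle\beta,\alpha'\rangle = 0$ and $|\alpha'|^2+|\beta|^2=1$. Define \[ \gamma(t,s) = \tfrac12\big(\alpha(s+t)+\alpha(s-t)\big) + \tfrac12\int_{s-t}^{s+t}\beta(\xi)\,d\xi, \] $a = \alpha'+\beta$, $b = \alpha'-\beta$, and smooth functions $\zeta,\eta$ by $a' = \zeta\, a^\perp$, $b' = \eta\, b^\perp$. Suppose that $(t_0,s_0)$ satisfies $\gamma_{,s}(t_0,s_0) = 0$, i.e. $a(s_0+t_0)+b(s_0-t_0) = 0$, and that \[ \zeta(s_0+t_0) \neq \eta(s_0-t_0). \] Then the unit tangent map $U(t_0,\cdot) = \gamma_{,s}(t_0,\cdot)/|\gamma_{,s}(t_0,\cdot)|$ of the curve $s\mapsto\gamma(t_0,s)$ is discontinuous at $s_0$; more specifically, it reverses direction across $s_0$: the one-sided limits $\lim_{s\to s_0^\pm}U(t_0,s)$ exist and are opposite unit vectors.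
   Context: For $v=(v_1,v_2)\in\mathbb{R}^2$, $v^\perp = (-v_2,v_1)$. Since $|a|=|b|=1$, the functions $\zeta,\eta$ are well defined. Note $2\gamma_{,s}(t,s) = a(s+t)+b(s-t)$, and $U(t,s)$ is defined wherever $\gamma_{,s}(t,s)\ne 0$. *)

theory Defs
  imports "HOL-Analysis.Analysis"
begin

text \<open>Vectors in the plane are represented as pairs of reals, with the
product inner product and Euclidean norm.\<close>

definition perp :: "real \<times> real \<Rightarrow> real \<times> real" where
  "perp v = (- snd v, fst v)"

definition smooth :: "(real \<Rightarrow> 'a::real_normed_vector) \<Rightarrow> bool" where
  "smooth f \<longleftrightarrow> (\<exists>D. D 0 = f \<and> (\<forall>n x. (D n has_vector_derivative D (Suc n) x) (at x)))"

definition oint :: "(real \<Rightarrow> 'a::euclidean_space) \<Rightarrow> real \<Rightarrow> real \<Rightarrow> 'a" where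
  "oint f x y = (if x \<le> y then integral {x..y} f else - integral {y..x} f)"

definition gam :: "(real \<Rightarrow> real \<times> real) \<Rightarrow> (real \<Rightarrow> real \<times> real) \<Rightarrow> real \<Rightarrow> real \<Rightarrow> real \<times> real" where
  "gam \<alpha> \<beta> t s = (1/2) *\<^sub>R (\<alpha> (s + t) + \<alpha> (s - t)) + (1/2) *\<^sub>R oint \<beta> (s - t) (s + t)"

definition unit_tangent :: "(real \<Rightarrow> real \<times> real) \<Rightarrow> (real \<Rightarrow> real \<times> real) \<Rightarrow> real \<Rightarrow> real \<Rightarrow> real \<times> real" where
  "unit_tangent \<alpha> \<beta> t s =
     (let g = vector_derivative (\<lambda>\<sigma>. gam \<alpha> \<beta> t \<sigma>) (at s) in (1 / norm g) *\<^sub>R g)"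

end

theory Submission
  imports Defs
begin

text \<open>Along the line t = t0 the tangent of s \<mapsto> \<gamma>(t0, s) is \<gamma>_s = G/2 with
G(s) = a(s + t0) + b(s - t0). At a critical point b(s0 - t0) = -a(s0 + t0), so
G'(s0) = \<zeta> perp a + \<eta> perp b = (\<zeta> - \<eta>) perp a, which is nonzero because orthogonality
of \<alpha>' and \<beta> makes |a| = 1. Hence s0 is a simple zero of G, G(s) = (s - s0)(G'(s0) + o(1)),
and the direction G/|G| tends to G'(s0)/|G'(s0)| from the right and to its negative from
the left.\<close>

lemma smooth_has_vector_derivative:
  "smooth f \<Longrightarrow> (f has_vector_derivative vector_derivative f (at x)) (at x)"
  unfolding smooth_def by (metis vector_derivative_at)

lemma smooth_imp_continuous_on: "smooth f \<Longrightarrow> continuous_on S f"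
  by (meson continuous_at_imp_continuous_on has_vector_derivative_continuous
      smooth_has_vector_derivative)

lemma smooth_vector_derivative:
  assumes "smooth f"
  shows "smooth (\<lambda>x. vector_derivative f (at x))"
proof -
  obtain D where "D 0 = f" and D: "\<And>n x. (D n has_vector_derivative D (Suc n) x) (at x)"
    using assms unfolding smooth_def by blast
  then have "(\<lambda>x. vector_derivative f (at x)) = D 1"
    using vector_derivative_at by fastforce
  with D show ?thesis
    unfolding smooth_def by (intro exI[of _ "\<lambda>n. D (Suc n)"]) simp
qed

lemma smooth_add:
  assumes "smooth f" and "smooth g"
  shows "smooth (\<lambda>x. f x + g x)"
proof -
  obtain D E where "D 0 = f" "\<And>n x. (D n has_vector_derivative D (Suc n) x) (at x)"
    and "E 0 = g" "\<And>n x. (E n has_vector_derivative E (Suc n) x) (at x)"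
    using assms unfolding smooth_def by blast
  then show ?thesis
    unfolding smooth_def
    by (intro exI[of _ "\<lambda>n x. D n x + E n x"]) (auto intro: has_vector_derivative_add)
qed

lemma smooth_diff:
  assumes "smooth f" and "smooth g"
  shows "smooth (\<lambda>x. f x - g x)"
proof -
  obtain D E where "D 0 = f" "\<And>n x. (D n has_vector_derivative D (Suc n) x) (at x)"
    and "E 0 = g" "\<And>n x. (E n has_vector_derivative E (Suc n) x) (at x)"
    using assms unfolding smooth_def by blast
  then show ?thesis
    unfolding smooth_def
    by (intro exI[of _ "\<lambda>n x. D n x - E n x"]) (auto intro: has_vector_derivative_diff)
qed

lemma oint_eq_integral_diff:
  fixes f :: "real \<Rightarrow> 'a::euclidean_space"
  assumes f: "continuous_on UNIV f" and "m \<le> x" "m \<le> y"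
  shows "oint f x y = integral {m..y} f - integral {m..x} f"
proof -
  have combine: "integral {m..u} f + integral {u..w} f = integral {m..w} f" if "m \<le> u" "u \<le> w" for u w
    using that by (intro Henstock_Kurzweil_Integration.integral_combine integrable_continuous_real
        continuous_on_subset[OF f]) auto
  show ?thesis
    using combine[of x y] combine[of y x] assms unfolding oint_def by (auto simp: algebra_simps)
qed

lemma oint_diff_base:
  fixes f :: "real \<Rightarrow> 'a::euclidean_space"
  assumes "continuous_on UNIV f"
  shows "oint f x y = oint f c y - oint f c x"
proof -
  define m where "m = min (min x y) c"
  have "m \<le> x" "m \<le> y" "m \<le> c" by (auto simp: m_def)
  then show ?thesis
    by (simp add: oint_eq_integral_diff[OF assms])
qed

lemma oint_has_vector_derivative:
  fixes f :: "real \<Rightarrow> 'a::euclidean_space"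
  assumes f: "continuous_on UNIV f"
  shows "((\<lambda>y. oint f c y) has_vector_derivative f y) (at y)"
proof -
  define m where "m = min c y - 1"
  have "((\<lambda>u. integral {m..u} f) has_vector_derivative f y) (at y within {m..y+1})"
    by (rule integral_has_vector_derivative) (auto simp: m_def intro: continuous_on_subset[OF f])
  moreover have "at y within {m..y+1} = at y"
    by (rule at_within_interior) (simp add: m_def)
  ultimately have "((\<lambda>u. integral {m..u} f - integral {m..c} f) has_vector_derivative f y) (at y)"
    using has_vector_derivative_diff[OF _ has_vector_derivative_const] by fastforce
  then show ?thesis
  proof (rule has_vector_derivative_transform_within_open)
    show "integral {m..u} f - integral {m..c} f = oint f c u" if "u \<in> {m<..}" for u
      using that oint_eq_integral_diff[OF f, of m c u] by (simp add: m_def)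
  qed (auto simp: m_def)
qed

lemma has_vector_derivative_compose_add:
  assumes "(f has_vector_derivative f') (at (s + c))"
  shows "((\<lambda>s. f (s + c)) has_vector_derivative f') (at s)"
proof -
  have "((\<lambda>s. s + c) has_vector_derivative 1) (at s)"
    by (auto intro!: derivative_eq_intros)
  from vector_diff_chain_at[OF this] assms show ?thesis
    by (simp add: o_def)
qed

lemma has_vector_derivative_compose_diff:
  "(f has_vector_derivative f') (at (s - c)) \<Longrightarrow> ((\<lambda>s. f (s - c)) has_vector_derivative f') (at s)"
  using has_vector_derivative_compose_add[of f f' s "- c"] by simp

lemma gam_has_vector_derivative:
  assumes \<alpha>': "\<And>x. (\<alpha> has_vector_derivative \<alpha>' x) (at x)" and \<beta>: "continuous_on UNIV \<beta>"
  shows "((\<lambda>s. gam \<alpha> \<beta> t s) has_vector_derivative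
           (1/2) *\<^sub>R ((\<alpha>' (s + t) + \<beta> (s + t)) + (\<alpha>' (s - t) - \<beta> (s - t)))) (at s)"
proof -
  have gam_eq: "gam \<alpha> \<beta> t = (\<lambda>s. (1/2) *\<^sub>R (\<alpha> (s + t) + \<alpha> (s - t))
                  + (1/2) *\<^sub>R (oint \<beta> 0 (s + t) - oint \<beta> 0 (s - t)))"
    unfolding gam_def by (intro ext) (simp add: oint_diff_base[OF \<beta>, of "_ - t" _ 0])
  have shifted: "((\<lambda>s. \<alpha> (s + c)) has_vector_derivative \<alpha>' (s + c)) (at s)"
    "((\<lambda>s. oint \<beta> 0 (s + c)) has_vector_derivative \<beta> (s + c)) (at s)" for c
    by (intro has_vector_derivative_compose_add \<alpha>' oint_has_vector_derivative \<beta>)+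
  have "((\<lambda>s. (1/2) *\<^sub>R (\<alpha> (s + t) + \<alpha> (s - t)) + (1/2) *\<^sub>R (oint \<beta> 0 (s + t) - oint \<beta> 0 (s - t)))
      has_vector_derivative (1/2) *\<^sub>R (\<alpha>' (s + t) + \<alpha>' (s - t)) + (1/2) *\<^sub>R (\<beta> (s + t) - \<beta> (s - t))) (at s)"
    using shifted[of t] shifted[of "- t"] by (auto intro!: derivative_eq_intros)
  then show ?thesis
    unfolding gam_eq by (simp add: algebra_simps)
qed

lemma unit_tangent_eq_sgn:
  "unit_tangent \<alpha> \<beta> t s = sgn (vector_derivative (\<lambda>\<sigma>. gam \<alpha> \<beta> t \<sigma>) (at s))"
  by (simp add: unit_tangent_def Let_def sgn_div_norm divide_inverse_commute)

lemma perp_minus: "perp (- x) = - perp x"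
  by (simp add: perp_def)

lemma perp_eq_0_iff: "perp x = 0 \<longleftrightarrow> x = 0"
  by (auto simp: perp_def prod_eq_iff)

lemma has_vector_derivative_imp_diff_quotient:
  fixes f :: "real \<Rightarrow> 'a::real_normed_vector"
  assumes "(f has_vector_derivative v) (at x)"
  shows "((\<lambda>y. (f y - f x) /\<^sub>R (y - x)) \<longlongrightarrow> v) (at x)"
proof -
  have "((\<lambda>y. (1 / norm (y - x)) *\<^sub>R (f y - (f x + (y - x) *\<^sub>R v))) \<longlongrightarrow> 0) (at x)"
    using assms unfolding has_vector_derivative_def has_derivative_within by simp
  then have "((\<lambda>y. norm ((1 / norm (y - x)) *\<^sub>R (f y - (f x + (y - x) *\<^sub>R v)))) \<longlongrightarrow> 0) (at x)"
    by (rule tendsto_norm_zero)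
  moreover have "\<forall>\<^sub>F y in at x. norm ((1 / norm (y - x)) *\<^sub>R (f y - (f x + (y - x) *\<^sub>R v)))
      = norm ((f y - f x) /\<^sub>R (y - x) - v)"
  proof (rule eventually_at_filter[THEN iffD2], intro always_eventually allI impI)
    fix y assume "y \<noteq> x"
    then have "(f y - f x) /\<^sub>R (y - x) - v = (1 / (y - x)) *\<^sub>R (f y - (f x + (y - x) *\<^sub>R v))"
      by (simp add: scaleR_diff_right scaleR_add_right divide_inverse)
    then show "norm ((1 / norm (y - x)) *\<^sub>R (f y - (f x + (y - x) *\<^sub>R v)))
      = norm ((f y - f x) /\<^sub>R (y - x) - v)"
      by simp
  qed
  ultimately have "((\<lambda>y. norm ((f y - f x) /\<^sub>R (y - x) - v)) \<longlongrightarrow> 0) (at x)"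
    by (rule Lim_transform_eventually)
  then show ?thesis
    by (simp add: tendsto_norm_zero_iff LIM_zero_iff)
qed

lemma sgn_tendsto_at_simple_zero:
  fixes G :: "real \<Rightarrow> 'a::real_normed_vector"
  assumes G': "(G has_vector_derivative v) (at s0)" and "G s0 = 0" and "v \<noteq> 0"
  shows "((\<lambda>s. sgn (G s)) \<longlongrightarrow> sgn v) (at_right s0)"
    and "((\<lambda>s. sgn (G s)) \<longlongrightarrow> - sgn v) (at_left s0)"
proof -
  define Q where "Q = (\<lambda>s. G s /\<^sub>R (s - s0))"
  have "(Q \<longlongrightarrow> v) (at s0)"
    using has_vector_derivative_imp_diff_quotient[OF G'] \<open>G s0 = 0\<close> by (simp add: Q_def)
  then have sgn_Q: "((\<lambda>s. sgn (Q s)) \<longlongrightarrow> sgn v) (at s0)"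
    using \<open>v \<noteq> 0\<close> by (rule tendsto_sgn)
  have G_eq: "sgn (G s) = sgn (s - s0) *\<^sub>R sgn (Q s)" if "s \<noteq> s0" for s
  proof -
    have "G s = (s - s0) *\<^sub>R Q s" using that by (simp add: Q_def)
    then show ?thesis by (simp add: sgn_scaleR)
  qed
  show "((\<lambda>s. sgn (G s)) \<longlongrightarrow> sgn v) (at_right s0)"
  proof (rule Lim_transform_eventually)
    show "((\<lambda>s. sgn (Q s)) \<longlongrightarrow> sgn v) (at_right s0)"
      using sgn_Q by (rule tendsto_within_subset) simp
    show "\<forall>\<^sub>F s in at_right s0. sgn (Q s) = sgn (G s)"
      by (rule eventually_at_rightI[of s0 "s0 + 1"]) (auto simp: G_eq)
  qed
  show "((\<lambda>s. sgn (G s)) \<longlongrightarrow> - sgn v) (at_left s0)"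
  proof (rule Lim_transform_eventually)
    show "((\<lambda>s. - sgn (Q s)) \<longlongrightarrow> - sgn v) (at_left s0)"
      using sgn_Q by (intro tendsto_minus, rule tendsto_within_subset) simp
    show "\<forall>\<^sub>F s in at_left s0. - sgn (Q s) = sgn (G s)"
      by (rule eventually_at_leftI[of "s0 - 1" s0]) (auto simp: G_eq)
  qed
qed

lemma sgn_tendsto_at_cancelling_rotations:
  assumes a': "(a has_vector_derivative z *\<^sub>R perp (a (s0 + t0))) (at (s0 + t0))"
    and b': "(b has_vector_derivative e *\<^sub>R perp (b (s0 - t0))) (at (s0 - t0))"
    and cancel: "a (s0 + t0) + b (s0 - t0) = 0" and "a (s0 + t0) \<noteq> 0" and "z \<noteq> e"
  shows "\<exists>u. norm u = 1 \<and> ((\<lambda>s. sgn (a (s + t0) + b (s - t0))) \<longlongrightarrow> u) (at_right s0)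
             \<and> ((\<lambda>s. sgn (a (s + t0) + b (s - t0))) \<longlongrightarrow> - u) (at_left s0)"
proof -
  define v where "v = (z - e) *\<^sub>R perp (a (s0 + t0))"
  have "v \<noteq> 0"
    using assms by (simp add: v_def perp_eq_0_iff)
  have "b (s0 - t0) = - a (s0 + t0)"
    using cancel by (simp add: add_eq_0_iff)
  then have "((\<lambda>s. a (s + t0) + b (s - t0)) has_vector_derivative v) (at s0)"
    using has_vector_derivative_add[OF has_vector_derivative_compose_add[OF a']
        has_vector_derivative_compose_diff[OF b']]
    by (simp add: v_def perp_minus scaleR_diff_left)
  from sgn_tendsto_at_simple_zero[OF this cancel \<open>v \<noteq> 0\<close>] \<open>v \<noteq> 0\<close> show ?thesis
    by (intro exI[of _ "sgn v"]) (simp add: norm_sgn)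
qed

theorem lemma2p4:
  fixes L :: real and \<alpha> \<beta> :: "real \<Rightarrow> real \<times> real"
    and \<zeta> \<eta> :: "real \<Rightarrow> real" and t0 s0 :: real
  assumes L_pos: "L > 0"
    and smooth_\<alpha>: "smooth \<alpha>" and smooth_\<beta>: "smooth \<beta>"
    and per_\<alpha>: "\<forall>x. \<alpha> (x + L) = \<alpha> x" and per_\<beta>: "\<forall>x. \<beta> (x + L) = \<beta> x"
    and nz: "\<forall>x. vector_derivative \<alpha> (at x) \<noteq> 0"
    and orth: "\<forall>x. inner (\<beta> x) (vector_derivative \<alpha> (at x)) = 0"
    and unit: "\<forall>x. (norm (vector_derivative \<alpha> (at x)))\<^sup>2 + (norm (\<beta> x))\<^sup>2 = 1"
    and \<zeta>_def: "\<forall>x. vector_derivative (\<lambda>y. vector_derivative \<alpha> (at y) + \<beta> y) (at x)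
                    = \<zeta> x *\<^sub>R perp (vector_derivative \<alpha> (at x) + \<beta> x)"
    and \<eta>_def: "\<forall>x. vector_derivative (\<lambda>y. vector_derivative \<alpha> (at y) - \<beta> y) (at x)
                    = \<eta> x *\<^sub>R perp (vector_derivative \<alpha> (at x) - \<beta> x)"
    and crit: "vector_derivative (\<lambda>s. gam \<alpha> \<beta> t0 s) (at s0) = 0"
    and neq: "\<zeta> (s0 + t0) \<noteq> \<eta> (s0 - t0)"
  shows "\<exists>u. norm u = 1 \<and> (unit_tangent \<alpha> \<beta> t0 \<longlongrightarrow> u) (at_right s0)
             \<and> (unit_tangent \<alpha> \<beta> t0 \<longlongrightarrow> - u) (at_left s0)"
proof -
  define a where "a = (\<lambda>y. vector_derivative \<alpha> (at y) + \<beta> y)"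
  define b where "b = (\<lambda>y. vector_derivative \<alpha> (at y) - \<beta> y)"
  have "smooth a" "smooth b"
    unfolding a_def b_def using smooth_\<alpha> smooth_\<beta>
    by (auto intro: smooth_add smooth_diff smooth_vector_derivative)
  moreover have "vector_derivative a (at x) = \<zeta> x *\<^sub>R perp (a x)"
    and "vector_derivative b (at x) = \<eta> x *\<^sub>R perp (b x)" for x
    using \<zeta>_def \<eta>_def by (simp_all add: a_def b_def)
  ultimately have a': "(a has_vector_derivative \<zeta> x *\<^sub>R perp (a x)) (at x)"
    and b': "(b has_vector_derivative \<eta> x *\<^sub>R perp (b x)) (at x)" for x
    by (metis smooth_has_vector_derivative)+
  have tangent: "vector_derivative (\<lambda>s. gam \<alpha> \<beta> t0 s) (at s) = (1/2) *\<^sub>R (a (s + t0) + b (s - t0))" for s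
    using gam_has_vector_derivative[OF smooth_has_vector_derivative[OF smooth_\<alpha>]
        smooth_imp_continuous_on[OF smooth_\<beta>], of t0 s]
    unfolding a_def b_def by (rule vector_derivative_at)
  have "(norm (a (s0 + t0)))\<^sup>2 = 1"
    using unit orth norm_add_Pythagorean[of "vector_derivative \<alpha> (at (s0 + t0))" "\<beta> (s0 + t0)"]
    by (simp add: a_def orthogonal_def inner_commute)
  moreover have "a (s0 + t0) + b (s0 - t0) = 0"
    using crit tangent[of s0] by simp
  ultimately have "\<exists>u. norm u = 1 \<and> ((\<lambda>s. sgn (a (s + t0) + b (s - t0))) \<longlongrightarrow> u) (at_right s0)
             \<and> ((\<lambda>s. sgn (a (s + t0) + b (s - t0))) \<longlongrightarrow> - u) (at_left s0)"
    using sgn_tendsto_at_cancelling_rotations[OF a' b'] neq by fastforce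
  moreover have "unit_tangent \<alpha> \<beta> t0 = (\<lambda>s. sgn (a (s + t0) + b (s - t0)))"
    by (simp add: fun_eq_iff unit_tangent_eq_sgn tangent sgn_scaleR)
  ultimately show ?thesis
    by simp
qed

end
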